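(* For $d\ge1$ let $B_d=\{x\in\mathbb{R}^{d+1}:\|x\|_2\le1\}$. (i) There exist a Hilbert space $\mathcal{H}_{d}$ with inner product $\langle\cdot,\cdot\rangle_{\mathcal{H}_d}$ and a map $\phi_d:B_d\to\mathcal{H}_d$ such that $\mathrm{asin}(x^\top w)=\langle\phi_d(x),\phi_d(w)\rangle_{\mathcal{H}_d}$ for all $x,w\in B_d$. (ii) There exist a Hilbert space $\mathcal{H}'_{d}$, a map $\phi'_d:B_d\to\mathcal{H}'_d$, and an indefinite linear operator $M_d:\mathcal{H}'_d\to\mathcal{H}'_d$ with $M_d^\top M_d=\mathrm{Id}$ such that $\mathrm{asinh}(w^\top Hx)=\langle\phi'_d(w),M_d\,\phi'_d(Hx)\rangle_{\mathcal{H}'_d}$ for all $w,x\in B_d$.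
   Context: $H=\mathrm{diag}(-1,1,\dots,1)\in\mathbb{R}^{(d+1)\times(d+1)}$; $\mathrm{Id}$ is the identity operator; $M_d^\top$ denotes the adjoint of $M_d$. *)

theory Defs
  imports Complex_Main
begin

text \<open>Vectors of R^(d+1) are represented as functions nat => real with coordinates
  0..d (all other coordinates zero). Coordinate 0 is the one flipped by H.\<close>

definition vec_space :: "nat \<Rightarrow> (nat \<Rightarrow> real) set" where
  "vec_space d = {x. \<forall>i>d. x i = 0}"

definition dotp :: "nat \<Rightarrow> (nat \<Rightarrow> real) \<Rightarrow> (nat \<Rightarrow> real) \<Rightarrow> real" where
  "dotp d x w = (\<Sum>i\<le>d. x i * w i)"

definition unit_ball :: "nat \<Rightarrow> (nat \<Rightarrow> real) set" where
  "unit_ball d = {x \<in> vec_space d. sqrt (dotp d x x) \<le> 1}"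

definition Hmat :: "(nat \<Rightarrow> real) \<Rightarrow> (nat \<Rightarrow> real)" where
  "Hmat x = (\<lambda>i. if i = 0 then - x i else x i)"

definition l2 :: "(nat \<Rightarrow> real) set" where
  "l2 = {f. summable (\<lambda>i. (f i)\<^sup>2)}"

definition l2_inner :: "(nat \<Rightarrow> real) \<Rightarrow> (nat \<Rightarrow> real) \<Rightarrow> real" where
  "l2_inner f g = (\<Sum>i. f i * g i)"

definition l2_linear_op :: "((nat \<Rightarrow> real) \<Rightarrow> (nat \<Rightarrow> real)) \<Rightarrow> bool" where
  "l2_linear_op M \<longleftrightarrow> (\<forall>u\<in>l2. M u \<in> l2) \<and>
     (\<forall>u\<in>l2. \<forall>v\<in>l2. M (\<lambda>i. u i + v i) = (\<lambda>i. M u i + M v i)) \<and>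
     (\<forall>u\<in>l2. \<forall>c::real. M (\<lambda>i. c * u i) = (\<lambda>i. c * M u i))"

definition l2_adjoint :: "((nat \<Rightarrow> real) \<Rightarrow> (nat \<Rightarrow> real)) \<Rightarrow> ((nat \<Rightarrow> real) \<Rightarrow> (nat \<Rightarrow> real)) \<Rightarrow> bool" where
  "l2_adjoint Mt M \<longleftrightarrow> (\<forall>u\<in>l2. Mt u \<in> l2) \<and>
     (\<forall>u\<in>l2. \<forall>v\<in>l2. l2_inner (Mt u) v = l2_inner u (M v))"

definition l2_indefinite :: "((nat \<Rightarrow> real) \<Rightarrow> (nat \<Rightarrow> real)) \<Rightarrow> bool" where
  "l2_indefinite M \<longleftrightarrow> (\<exists>u\<in>l2. l2_inner u (M u) > 0) \<and> (\<exists>v\<in>l2. l2_inner v (M v) < 0)"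

end

(* Both functions are odd power series with summable coefficients on [-1,1]:
   arcsin t = sum_k a_k t^(2k+1) / (2k+1) and arsinh t = sum_k (-1)^k a_k t^(2k+1) / (2k+1),
   where a_k = (1/2)_k / k! = binom(2k,k) / 4^k are the coefficients of the binomial series of
   (1 - u)^(-1/2); a_k^2 (2k+1) <= 1 makes the coefficients O(n^(-3/2)).
   Expanding (x.w)^n into monomials, a kernel sum_n b_n (x.w)^n with b_n >= 0 and sum_n b_n < oo
   is the l2 inner product of feature vectors indexed by (n, [i_1, ..., i_n]) with entries
   sqrt (b_n) x_(i_1) ... x_(i_n); the absolute bound sum_i |x_i w_i| <= 1 on the unit ball
   justifies the rearrangement. The signs (-1)^k of arsinh are put into the diagonal operator
   M = diag (+-1), which is self-adjoint, an involution and indefinite. *)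

theory Submission
  imports Defs "HOL-Analysis.Analysis"
begin

definition central_coeff :: "nat \<Rightarrow> real" where
  "central_coeff k = pochhammer (1/2) k / fact k"

lemma central_coeff_pos: "central_coeff k > 0"
  by (simp add: central_coeff_def pochhammer_pos)

lemma central_coeff_Suc:
  "central_coeff (Suc k) = central_coeff k * (2 * real k + 1) / (2 * real k + 2)"
  by (simp add: central_coeff_def pochhammer_Suc field_simps)

lemma gbinomial_minus_half: "(-1/2 :: real) gchoose k = (-1) ^ k * central_coeff k"
  by (simp add: gbinomial_pochhammer central_coeff_def)

lemma central_coeff_square_le: "(central_coeff k)\<^sup>2 * (2 * real k + 1) \<le> 1"
proof (induction k)
  case (Suc k)
  have "(central_coeff (Suc k))\<^sup>2 * (2 * real (Suc k) + 1)
      = (central_coeff k)\<^sup>2 * (2 * real k + 1) * ((2 * real k + 1) * (2 * real k + 3) / (2 * real k + 2)\<^sup>2)"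
    by (simp add: central_coeff_Suc power2_eq_square field_simps)
  also have "\<dots> \<le> 1"
  proof (rule mult_le_one[OF Suc.IH])
    have "(2 * real k + 1) * (2 * real k + 3) \<le> (2 * real k + 2)\<^sup>2"
      by (simp add: power2_eq_square algebra_simps)
    then show "(2 * real k + 1) * (2 * real k + 3) / (2 * real k + 2)\<^sup>2 \<le> 1"
      by (simp add: pos_divide_le_eq)
  qed simp
  finally show ?case .
qed (simp add: central_coeff_def)

lemma central_coeff_le: "central_coeff k \<le> (2 * real k + 1) powr (-1/2)"
proof (rule power2_le_imp_le)
  have pos: "2 * real k + 1 > 0"
    by simp
  have "(central_coeff k)\<^sup>2 \<le> 1 / (2 * real k + 1)"
    using central_coeff_square_le[of k] by (subst pos_le_divide_eq[OF pos])
  also have "\<dots> = (2 * real k + 1) powr (of_nat 2 * (-1/2))"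
    using pos by (simp add: powr_neg_one)
  also have "\<dots> = ((2 * real k + 1) powr (-1/2))\<^sup>2"
    using pos by (subst powr_power) simp_all
  finally show "(central_coeff k)\<^sup>2 \<le> ((2 * real k + 1) powr (-1/2))\<^sup>2" .
qed simp

definition arcsin_coeff :: "nat \<Rightarrow> real" where
  "arcsin_coeff n = (if odd n then central_coeff (n div 2) / n else 0)"

lemma arcsin_coeff_nonneg: "arcsin_coeff n \<ge> 0"
  using central_coeff_pos by (simp add: arcsin_coeff_def less_imp_le)

lemma arcsin_coeff_le: "arcsin_coeff n \<le> real n powr (-3/2)"
proof (cases "odd n")
  case True
  have "real (2 * (n div 2) + 1) = real n"
    by (simp only: odd_two_times_div_two_succ[OF True])
  then have n: "2 * real (n div 2) + 1 = real n"
    by simp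
  have "arcsin_coeff n \<le> real n powr (-1/2) / real n powr 1"
    using True central_coeff_le[of "n div 2"] by (simp add: arcsin_coeff_def n divide_right_mono)
  also have "\<dots> = real n powr (-3/2)"
    by (simp only: powr_diff[symmetric]) simp
  finally show ?thesis .
qed (simp add: arcsin_coeff_def)

lemma summable_arcsin_coeff: "summable arcsin_coeff"
proof (rule summable_comparison_test)
  show "\<exists>N. \<forall>n\<ge>N. norm (arcsin_coeff n) \<le> real n powr (-3/2)"
    using arcsin_coeff_le arcsin_coeff_nonneg by simp
qed (simp add: summable_real_powr_iff)

definition arcsin_series :: "real \<Rightarrow> real \<Rightarrow> real" where
  "arcsin_series s t = (\<Sum>n. s ^ (n div 2) * arcsin_coeff n * t ^ n)"

lemma summable_arcsin_series_coeffs: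
  assumes "\<bar>s\<bar> \<le> 1"
  shows "summable (\<lambda>n. \<bar>s ^ (n div 2) * arcsin_coeff n\<bar>)"
proof (rule summable_comparison_test[OF _ summable_arcsin_coeff])
  show "\<exists>N. \<forall>n\<ge>N. norm \<bar>s ^ (n div 2) * arcsin_coeff n\<bar> \<le> arcsin_coeff n"
    using assms arcsin_coeff_nonneg
    by (auto simp: abs_mult power_abs intro!: mult_left_le_one_le power_le_one)
qed

lemma continuous_on_arcsin_series:
  assumes "\<bar>s\<bar> \<le> 1"
  shows "continuous_on {-1..1} (arcsin_series s)"
proof -
  have "uniform_limit {-1..1} (\<lambda>N t. \<Sum>n<N. s ^ (n div 2) * arcsin_coeff n * t ^ n)
          (arcsin_series s) sequentially"
    unfolding arcsin_series_def[abs_def]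
    by (rule Weierstrass_m_test[OF _ summable_arcsin_series_coeffs[OF assms]])
       (auto simp: abs_mult power_abs intro!: mult_left_le power_le_one)
  then show ?thesis
    by (rule uniform_limit_theorem[rotated]) (auto intro!: always_eventually continuous_intros)
qed

lemma diffs_arcsin_series_coeffs:
  "diffs (\<lambda>n. s ^ (n div 2) * arcsin_coeff n) n =
     (if even n then s ^ (n div 2) * central_coeff (n div 2) else 0)"
  by (auto simp: diffs_def arcsin_coeff_def)

lemma arcsin_series_deriv:
  assumes s: "\<bar>s\<bar> \<le> 1" and t: "\<bar>t\<bar> < 1"
  shows "DERIV (arcsin_series s) t :> (1 - s * t\<^sup>2) powr (-1/2)"
proof -
  let ?c = "\<lambda>n. s ^ (n div 2) * arcsin_coeff n"
  have termwise: "DERIV (\<lambda>t. \<Sum>n. ?c n * t ^ n) t :> (\<Sum>n. diffs ?c n * t ^ n)"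
    by (rule termdiffs_strong[of _ 1])
       (use summable_arcsin_series_coeffs[OF s] t in \<open>simp_all add: summable_rabs_cancel\<close>)
  have "t\<^sup>2 < 1"
    using t by (simp add: abs_square_less_1)
  then have "\<bar>- (s * t\<^sup>2)\<bar> < 1"
    using s mult_left_le_one_le[of "t\<^sup>2" "\<bar>s\<bar>"] by (simp add: abs_mult)
  then have binomial: "(\<lambda>k. ((-1/2) gchoose k) * (- (s * t\<^sup>2)) ^ k) sums (1 - s * t\<^sup>2) powr (-1/2)"
    using gen_binomial_real by fastforce
  have "((-1/2) gchoose k) * (- (s * t\<^sup>2)) ^ k = diffs ?c (2 * k) * t ^ (2 * k)" for k
  proof -
    have "((-1/2) gchoose k) * (- (s * t\<^sup>2)) ^ k
        = ((-1) ^ k * (-1) ^ k) * (central_coeff k * s ^ k * t ^ (2 * k))"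
      unfolding gbinomial_minus_half
      by (subst power_minus[of "s * t\<^sup>2"]) (simp add: power_mult_distrib mult_ac flip: power_mult)
    also have "\<dots> = diffs ?c (2 * k) * t ^ (2 * k)"
      by (simp add: diffs_arcsin_series_coeffs flip: power_mult_distrib)
    finally show ?thesis .
  qed
  with binomial have "(\<lambda>k. diffs ?c (2 * k) * t ^ (2 * k)) sums (1 - s * t\<^sup>2) powr (-1/2)"
    by simp
  then have "(\<lambda>n. diffs ?c n * t ^ n) sums (1 - s * t\<^sup>2) powr (-1/2)"
    by (subst (asm) sums_mono_reindex[of "\<lambda>k. 2 * k"])
       (auto simp: strict_mono_def diffs_arcsin_series_coeffs elim!: evenE)
  with termwise show ?thesis
    by (simp add: arcsin_series_def[abs_def] sums_iff)
qed

lemma eq_if_same_derivative: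
  fixes f g :: "real \<Rightarrow> real"
  assumes "continuous_on {a..b} f" "continuous_on {a..b} g"
    and "\<And>t. a < t \<Longrightarrow> t < b \<Longrightarrow> DERIV f t :> D t"
    and "\<And>t. a < t \<Longrightarrow> t < b \<Longrightarrow> DERIV g t :> D t"
    and c: "c \<in> {a..b}" "f c = g c" and t: "t \<in> {a..b}"
  shows "f t = g t"
proof (cases "a < b")
  case True
  have "f x - g x = f a - g a" if "x \<in> {a..b}" for x
  proof (rule DERIV_isconst2[of a b "\<lambda>x. f x - g x"])
    show "continuous_on {a..b} (\<lambda>x. f x - g x)"
      using assms(1,2) by (rule continuous_on_diff)
    show "DERIV (\<lambda>x. f x - g x) x :> 0" if "a < x" "x < b" for x
      using DERIV_diff[OF assms(3,4)[OF that]] by simp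
  qed (use True that in auto)
  from this[OF t] this[OF c(1)] show ?thesis
    using c(2) by simp
next
  case False
  with c(1) t have "t = c" by simp
  with c(2) show ?thesis by simp
qed

lemma arcsin_series_0: "arcsin_series s 0 = 0"
  by (simp add: arcsin_series_def arcsin_coeff_def)

lemma arcsin_eq_arcsin_series:
  assumes "\<bar>t\<bar> \<le> 1"
  shows "arcsin t = arcsin_series 1 t"
proof (rule eq_if_same_derivative[where f = arcsin and g = "arcsin_series 1" and a = "-1" and b = 1
      and c = 0 and D = "\<lambda>t. (1 - 1 * t\<^sup>2) powr (-1/2)"])
  fix t :: real
  assume t: "-1 < t" "t < 1"
  then have "t\<^sup>2 < 1"
    by (simp add: abs_square_less_1)
  then have "(1 - 1 * t\<^sup>2) powr (-1/2) = inverse (sqrt (1 - t\<^sup>2))"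
    by (simp add: powr_minus_divide powr_half_sqrt inverse_eq_divide)
  then show "DERIV arcsin t :> (1 - 1 * t\<^sup>2) powr (-1/2)"
    using DERIV_arcsin[OF t] by simp
next
  fix t :: real
  assume "-1 < t" "t < 1"
  then show "DERIV (arcsin_series 1) t :> (1 - 1 * t\<^sup>2) powr (-1/2)"
    by (intro arcsin_series_deriv) auto
qed (use assms in \<open>auto simp: continuous_on_arcsin' continuous_on_arcsin_series arcsin_series_0\<close>)

lemma arsinh_eq_arcsin_series:
  assumes "\<bar>t\<bar> \<le> 1"
  shows "arsinh t = arcsin_series (-1) t"
proof (rule eq_if_same_derivative[where f = arsinh and g = "arcsin_series (-1)" and a = "-1" and b = 1
      and c = 0 and D = "\<lambda>t. (1 - (-1) * t\<^sup>2) powr (-1/2)"])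
  fix t :: real
  have "(1 - (-1) * t\<^sup>2) powr (-1/2) = 1 / sqrt (t\<^sup>2 + 1)"
    by (simp add: add.commute powr_minus_divide powr_half_sqrt)
  then show "DERIV arsinh t :> (1 - (-1) * t\<^sup>2) powr (-1/2)"
    using arsinh_real_has_field_derivative[of t UNIV] by simp
next
  fix t :: real
  assume "-1 < t" "t < 1"
  then show "DERIV (arcsin_series (-1)) t :> (1 - (-1) * t\<^sup>2) powr (-1/2)"
    by (intro arcsin_series_deriv) auto
qed (use assms in \<open>auto simp: continuous_on_arsinh continuous_on_arcsin_series arcsin_series_0\<close>)

lemma has_sum_finite_fibres:
  fixes f :: "nat \<times> 'b \<Rightarrow> real"
  assumes fin: "\<And>n. finite (B n)" and supp: "\<And>n l. l \<notin> B n \<Longrightarrow> f (n, l) = 0"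
    and abs: "summable (\<lambda>n. \<Sum>l\<in>B n. \<bar>f (n, l)\<bar>)"
    and sums: "(\<lambda>n. \<Sum>l\<in>B n. f (n, l)) sums S"
  shows "(f has_sum S) UNIV"
proof -
  have "norm (norm (infsum (\<lambda>l. norm (f (n, l))) (B n))) = (\<Sum>l\<in>B n. \<bar>f (n, l)\<bar>)" for n
    using fin[of n] by (simp add: sum_nonneg)
  with abs have "summable (\<lambda>n. norm (norm (infsum (\<lambda>l. norm (f (n, l))) (B n))))"
    by simp
  then have "(\<lambda>p. norm (f p)) summable_on Sigma UNIV B"
    unfolding Infinite_Sum.abs_summable_on_Sigma_iff
  proof (intro conjI ballI)
    fix n
    show "(\<lambda>l. norm (f (n, l))) summable_on B n"
      using fin by (rule summable_on_finite)
  qed (rule norm_summable_imp_summable_on)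
  then have "f summable_on Sigma UNIV B"
    by (rule summable_on_iff_abs_summable_on_real[THEN iffD2])
  moreover have "summable (\<lambda>n. norm (\<Sum>l\<in>B n. f (n, l)))"
    using abs by (rule summable_comparison_test[rotated]) (simp add: sum_abs)
  then have "((\<lambda>n. \<Sum>l\<in>B n. f (n, l)) has_sum S) UNIV"
    using sums by (rule norm_summable_imp_has_sum)
  ultimately have "(f has_sum S) (Sigma UNIV B)"
    using fin by (intro has_sum_SigmaI[where g = "\<lambda>n. \<Sum>l\<in>B n. f (n, l)"]) simp_all
  also have "?this \<longleftrightarrow> (f has_sum S) UNIV"
    using supp by (intro has_sum_cong_neutral) auto
  finally show ?thesis .
qed

lemma prod_list_map_mult:
  fixes f g :: "'a \<Rightarrow> 'b :: comm_monoid_mult"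
  shows "prod_list (map (\<lambda>i. f i * g i) xs) = prod_list (map f xs) * prod_list (map g xs)"
  by (induction xs) (simp_all add: mult_ac)

lemma abs_prod_list_map:
  fixes f :: "'a \<Rightarrow> 'b :: linordered_idom"
  shows "\<bar>prod_list (map f xs)\<bar> = prod_list (map (\<lambda>i. \<bar>f i\<bar>) xs)"
  by (induction xs) (simp_all add: abs_mult)

lemma abs_mult_mult_power_le:
  fixes s t b :: real
  assumes "\<bar>s\<bar> \<le> 1" "\<bar>t\<bar> \<le> 1" "b \<ge> 0"
  shows "\<bar>s * b * t ^ n\<bar> \<le> b"
proof -
  have "\<bar>t\<bar> ^ n \<le> 1"
    using assms(2) by (simp add: power_le_one)
  have "\<bar>s * b * t ^ n\<bar> = \<bar>s\<bar> * (b * \<bar>t\<bar> ^ n)"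
    using assms(3) by (simp add: abs_mult power_abs)
  also have "\<dots> \<le> 1 * (b * 1)"
    using assms \<open>\<bar>t\<bar> ^ n \<le> 1\<close> by (intro mult_mono mult_left_mono) auto
  finally show ?thesis
    by simp
qed

definition multi_indices :: "nat \<Rightarrow> nat \<Rightarrow> nat list set" where
  "multi_indices d n = {l. set l \<subseteq> {..d} \<and> length l = n}"

lemma finite_multi_indices: "finite (multi_indices d n)"
  by (simp add: multi_indices_def finite_lists_length_eq)

lemma sum_multi_indices_prod_list:
  fixes f :: "nat \<Rightarrow> 'a :: comm_semiring_1"
  shows "(\<Sum>l\<in>multi_indices d n. prod_list (map f l)) = (\<Sum>i\<le>d. f i) ^ n"
proof (induction n)
  case 0
  have "multi_indices d 0 = {[]}"
    by (auto simp: multi_indices_def)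
  then show ?case by simp
next
  case (Suc n)
  have img: "multi_indices d (Suc n) = (\<lambda>(l, i). i # l) ` (multi_indices d n \<times> {..d})"
    unfolding multi_indices_def by (rule lists_length_Suc_eq)
  have inj: "inj_on (\<lambda>(l, i). i # l) (multi_indices d n \<times> {..d})"
    by (auto simp: inj_on_def)
  have "(\<Sum>l\<in>multi_indices d (Suc n). prod_list (map f l))
      = (\<Sum>(l, i)\<in>multi_indices d n \<times> {..d}. f i * prod_list (map f l))"
    unfolding img by (subst sum.reindex[OF inj]) (simp add: comp_def case_prod_beta)
  also have "\<dots> = (\<Sum>l\<in>multi_indices d n. \<Sum>i\<le>d. f i * prod_list (map f l))"
    by (simp add: sum.cartesian_product)
  also have "\<dots> = (\<Sum>i\<le>d. f i) * (\<Sum>l\<in>multi_indices d n. prod_list (map f l))"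
    unfolding sum_product by (rule sum.swap)
  also have "\<dots> = (\<Sum>i\<le>d. f i) ^ Suc n"
    using Suc.IH by simp
  finally show ?case .
qed

definition monomial_feature ::
    "nat \<Rightarrow> (nat \<Rightarrow> real) \<Rightarrow> (nat \<Rightarrow> real) \<Rightarrow> nat \<times> nat list \<Rightarrow> real" where
  "monomial_feature d b x =
     (\<lambda>(n, l). if l \<in> multi_indices d n then sqrt (b n) * prod_list (map x l) else 0)"

lemma monomial_feature_mult:
  assumes "b n \<ge> 0" "l \<in> multi_indices d n"
  shows "monomial_feature d b x (n, l) * monomial_feature d b w (n, l)
           = b n * prod_list (map (\<lambda>i. x i * w i) l)"
  using assms by (simp add: monomial_feature_def prod_list_map_mult)

lemma sum_monomial_feature_mult:
  assumes "b n \<ge> 0"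
  shows "(\<Sum>l\<in>multi_indices d n. monomial_feature d b x (n, l) * monomial_feature d b w (n, l))
           = b n * dotp d x w ^ n"
proof -
  have "(\<Sum>l\<in>multi_indices d n. monomial_feature d b x (n, l) * monomial_feature d b w (n, l))
      = (\<Sum>l\<in>multi_indices d n. b n * prod_list (map (\<lambda>i. x i * w i) l))"
    using assms by (intro sum.cong) (simp_all add: monomial_feature_mult)
  then show ?thesis
    by (simp add: sum_multi_indices_prod_list dotp_def flip: sum_distrib_left)
qed

lemma sum_abs_monomial_feature_mult:
  assumes "b n \<ge> 0"
  shows "(\<Sum>l\<in>multi_indices d n. \<bar>monomial_feature d b x (n, l) * monomial_feature d b w (n, l)\<bar>)
           = b n * (\<Sum>i\<le>d. \<bar>x i * w i\<bar>) ^ n"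
proof -
  have "(\<Sum>l\<in>multi_indices d n. \<bar>monomial_feature d b x (n, l) * monomial_feature d b w (n, l)\<bar>)
      = (\<Sum>l\<in>multi_indices d n. b n * prod_list (map (\<lambda>i. \<bar>x i * w i\<bar>) l))"
    using assms
    by (intro sum.cong) (simp_all add: monomial_feature_mult abs_mult[of "b n"] abs_prod_list_map)
  then show ?thesis
    by (simp add: sum_multi_indices_prod_list flip: sum_distrib_left)
qed

lemma monomial_feature_kernel_has_sum:
  assumes b: "\<And>n. b n \<ge> 0" "summable b" and \<sigma>: "\<And>n. \<bar>\<sigma> n\<bar> \<le> 1"
    and xw: "(\<Sum>i\<le>d. \<bar>x i * w i\<bar>) \<le> 1"
  shows "((\<lambda>p. monomial_feature d b x p * (\<sigma> (fst p) * monomial_feature d b w p))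
           has_sum (\<Sum>n. \<sigma> n * b n * dotp d x w ^ n)) UNIV"
proof -
  define F where "F p = monomial_feature d b x p * (\<sigma> (fst p) * monomial_feature d b w p)" for p
  have F: "F (n, l) = \<sigma> n * (monomial_feature d b x (n, l) * monomial_feature d b w (n, l))" for n l
    by (simp add: F_def)
  have "\<bar>dotp d x w\<bar> \<le> 1"
    unfolding dotp_def using sum_abs xw by (rule order_trans)
  then have "\<bar>\<sigma> n * b n * dotp d x w ^ n\<bar> \<le> b n" for n
    by (intro abs_mult_mult_power_le \<sigma> b(1))
  then have "summable (\<lambda>n. \<sigma> n * b n * dotp d x w ^ n)"
    by (intro summable_comparison_test[OF _ b(2)]) auto
  then have sums: "(\<lambda>n. \<Sum>l\<in>multi_indices d n. F (n, l)) sums (\<Sum>n. \<sigma> n * b n * dotp d x w ^ n)"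
    using b(1) by (simp add: F sum_monomial_feature_mult summable_sums mult.assoc flip: sum_distrib_left)
  have abs_summable: "summable (\<lambda>n. \<Sum>l\<in>multi_indices d n. \<bar>F (n, l)\<bar>)"
  proof (rule summable_comparison_test[OF _ b(2)], intro exI allI impI)
    fix n
    have "(\<Sum>l\<in>multi_indices d n. \<bar>F (n, l)\<bar>) = \<bar>\<sigma> n\<bar> * (b n * (\<Sum>i\<le>d. \<bar>x i * w i\<bar>) ^ n)"
      using b(1)[of n] by (simp add: F abs_mult[of "\<sigma> n"] sum_abs_monomial_feature_mult
          flip: sum_distrib_left)
    also have "\<dots> = \<bar>\<sigma> n * b n * (\<Sum>i\<le>d. \<bar>x i * w i\<bar>) ^ n\<bar>"
      using b(1)[of n] by (simp add: abs_mult sum_nonneg)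
    also have "\<dots> \<le> b n"
      using \<sigma>[of n] b(1)[of n] xw by (intro abs_mult_mult_power_le) (auto simp: sum_nonneg)
    finally show "norm (\<Sum>l\<in>multi_indices d n. \<bar>F (n, l)\<bar>) \<le> b n"
      by (simp add: sum_nonneg)
  qed
  have supp: "F (n, l) = 0" if "l \<notin> multi_indices d n" for n l
    using that by (simp add: F_def monomial_feature_def)
  have "(F has_sum (\<Sum>n. \<sigma> n * b n * dotp d x w ^ n)) UNIV"
    using finite_multi_indices supp abs_summable sums by (rule has_sum_finite_fibres)
  then show ?thesis
    unfolding F_def .
qed

definition monomial_index :: "nat \<Rightarrow> nat \<times> nat list" where
  "monomial_index = from_nat_into UNIV"

lemma bij_monomial_index: "bij monomial_index"
  unfolding monomial_index_def
  by (rule bij_betw_from_nat_into) (simp_all add: infinite_UNIV_listI finite_prod)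

definition feature_map :: "nat \<Rightarrow> (nat \<Rightarrow> real) \<Rightarrow> (nat \<Rightarrow> real) \<Rightarrow> nat \<Rightarrow> real" where
  "feature_map d b x i = monomial_feature d b x (monomial_index i)"

definition diag_op :: "(nat \<Rightarrow> real) \<Rightarrow> (nat \<Rightarrow> real) \<Rightarrow> nat \<Rightarrow> real" where
  "diag_op c u = (\<lambda>i. c i * u i)"

lemma feature_map_kernel_sums:
  assumes "\<And>n. b n \<ge> 0" "summable b" "\<And>n. \<bar>\<sigma> n\<bar> \<le> 1"
    and "(\<Sum>i\<le>d. \<bar>x i * w i\<bar>) \<le> 1"
  shows "(\<lambda>i. feature_map d b x i * diag_op (\<lambda>i. \<sigma> (fst (monomial_index i))) (feature_map d b w) i)
           sums (\<Sum>n. \<sigma> n * b n * dotp d x w ^ n)"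
proof -
  have "((\<lambda>i. (\<lambda>p. monomial_feature d b x p * (\<sigma> (fst p) * monomial_feature d b w p)) (monomial_index i))
          has_sum (\<Sum>n. \<sigma> n * b n * dotp d x w ^ n)) UNIV"
    using monomial_feature_kernel_has_sum[OF assms]
    by (subst has_sum_reindex_bij_betw[OF bij_monomial_index])
  then show ?thesis
    by (simp add: feature_map_def diag_op_def has_sum_imp_sums)
qed

lemma sum_abs_mult_le_1_if_unit_ball:
  assumes "x \<in> unit_ball d" "w \<in> unit_ball d"
  shows "(\<Sum>i\<le>d. \<bar>x i * w i\<bar>) \<le> 1"
proof -
  have "(\<Sum>i\<le>d. \<bar>x i * w i\<bar>) \<le> (\<Sum>i\<le>d. ((x i)\<^sup>2 + (w i)\<^sup>2) / 2)"
  proof (rule sum_mono)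
    fix i
    show "\<bar>x i * w i\<bar> \<le> ((x i)\<^sup>2 + (w i)\<^sup>2) / 2"
      using sum_squares_bound[of "\<bar>x i\<bar>" "\<bar>w i\<bar>"] by (simp add: abs_mult)
  qed
  also have "\<dots> = (dotp d x x + dotp d w w) / 2"
    by (simp only: dotp_def power2_eq_square sum.distrib flip: sum_divide_distrib)
  also have "\<dots> \<le> 1"
    using assms by (simp add: unit_ball_def)
  finally show ?thesis .
qed

lemma abs_dotp_le_1_if_unit_ball:
  assumes "x \<in> unit_ball d" "w \<in> unit_ball d"
  shows "\<bar>dotp d x w\<bar> \<le> 1"
  unfolding dotp_def using sum_abs sum_abs_mult_le_1_if_unit_ball[OF assms] by (rule order_trans)

lemma Hmat_unit_ball:
  assumes "x \<in> unit_ball d"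
  shows "Hmat x \<in> unit_ball d"
proof -
  have "dotp d (Hmat x) (Hmat x) = dotp d x x"
    unfolding dotp_def Hmat_def by (intro sum.cong) auto
  with assms show ?thesis
    by (simp add: unit_ball_def vec_space_def Hmat_def)
qed

lemma feature_map_l2:
  assumes "\<And>n. b n \<ge> 0" "summable b" "x \<in> unit_ball d"
  shows "feature_map d b x \<in> l2"
proof -
  have "(\<lambda>i. feature_map d b x i * diag_op (\<lambda>i. 1) (feature_map d b x) i)
          sums (\<Sum>n. 1 * b n * dotp d x x ^ n)"
    using assms by (intro feature_map_kernel_sums sum_abs_mult_le_1_if_unit_ball) auto
  then show ?thesis
    by (auto simp: l2_def diag_op_def power2_eq_square dest: sums_summable)
qed

lemma l2_inner_feature_map:
  assumes "\<And>n. b n \<ge> 0" "summable b" "\<And>n. \<bar>\<sigma> n\<bar> \<le> 1"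
    and "x \<in> unit_ball d" "w \<in> unit_ball d"
  shows "l2_inner (feature_map d b x) (diag_op (\<lambda>i. \<sigma> (fst (monomial_index i))) (feature_map d b w))
           = (\<Sum>n. \<sigma> n * b n * dotp d x w ^ n)"
proof -
  have "(\<lambda>i. feature_map d b x i * diag_op (\<lambda>i. \<sigma> (fst (monomial_index i))) (feature_map d b w) i)
          sums (\<Sum>n. \<sigma> n * b n * dotp d x w ^ n)"
    using assms by (intro feature_map_kernel_sums sum_abs_mult_le_1_if_unit_ball)
  then show ?thesis
    unfolding l2_inner_def by (simp add: sums_iff)
qed

lemma diag_op_l2:
  assumes "\<And>i. \<bar>c i\<bar> = 1" "u \<in> l2"
  shows "diag_op c u \<in> l2"
proof -
  have "(c i)\<^sup>2 = 1" for i
    using assms(1)[of i] by (metis power2_abs power_one)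
  with assms(2) show ?thesis
    by (simp add: l2_def diag_op_def power_mult_distrib)
qed

lemma l2_linear_op_diag_op:
  assumes "\<And>i. \<bar>c i\<bar> = 1"
  shows "l2_linear_op (diag_op c)"
  unfolding l2_linear_op_def
proof (intro conjI ballI allI)
  show "diag_op c u \<in> l2" if "u \<in> l2" for u
    using assms that by (rule diag_op_l2)
qed (simp_all add: diag_op_def distrib_left mult.left_commute)

lemma l2_adjoint_diag_op:
  assumes "\<And>i. \<bar>c i\<bar> = 1"
  shows "l2_adjoint (diag_op c) (diag_op c)"
  unfolding l2_adjoint_def
proof (intro conjI ballI)
  show "diag_op c u \<in> l2" if "u \<in> l2" for u
    using assms that by (rule diag_op_l2)
qed (simp add: l2_inner_def diag_op_def mult_ac)

lemma diag_op_involution: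
  assumes "\<And>i. \<bar>c i\<bar> = 1"
  shows "diag_op c (diag_op c u) = u"
proof
  fix i
  have "c i * c i = 1"
    using assms[of i] by (metis abs_mult_self_eq mult_1)
  then show "diag_op c (diag_op c u) i = u i"
    by (simp add: diag_op_def mult.assoc[symmetric])
qed

lemma l2_inner_diag_op_unit_vector:
  "l2_inner (\<lambda>i. if i = j then 1 else 0) (diag_op c (\<lambda>i. if i = j then 1 else 0)) = c j"
proof -
  have "(\<lambda>i. (if i = j then 1 else 0) * diag_op c (\<lambda>i. if i = j then 1 else 0) i)
      = (\<lambda>i. if i = j then c j else 0)"
    by (auto simp: diag_op_def)
  then show ?thesis
    using sums_single[of j "\<lambda>_. c j"] by (simp add: l2_inner_def sums_iff)
qed

lemma unit_vector_l2: "(\<lambda>i. if i = j then 1 else 0 :: real) \<in> l2"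
proof -
  have "(\<lambda>i. (if i = j then 1 else 0 :: real)\<^sup>2) = (\<lambda>i. if i = j then 1 else 0)"
    by auto
  then show ?thesis
    using sums_summable[OF sums_single[of j "\<lambda>_. 1 :: real"]] by (simp add: l2_def)
qed

lemma l2_indefinite_diag_op:
  assumes "c i > 0" "c j < 0"
  shows "l2_indefinite (diag_op c)"
  unfolding l2_indefinite_def
  using assms unit_vector_l2 l2_inner_diag_op_unit_vector by metis

theorem lemma1:
  fixes d :: nat
  assumes "d \<ge> 1"
  shows "(\<exists>\<phi>. (\<forall>x\<in>unit_ball d. \<phi> x \<in> l2) \<and>
            (\<forall>x\<in>unit_ball d. \<forall>w\<in>unit_ball d.
               arcsin (dotp d x w) = l2_inner (\<phi> x) (\<phi> w)))
       \<and> (\<exists>\<phi>' M Mt. (\<forall>x\<in>unit_ball d. \<phi>' x \<in> l2) \<and>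
            l2_linear_op M \<and> l2_indefinite M \<and>
            l2_adjoint Mt M \<and> (\<forall>u\<in>l2. Mt (M u) = u) \<and>
            (\<forall>w\<in>unit_ball d. \<forall>x\<in>unit_ball d.
               arsinh (dotp d w (Hmat x)) = l2_inner (\<phi>' w) (M (\<phi>' (Hmat x)))))"
proof -
  let ?\<phi> = "feature_map d arcsin_coeff"
  let ?c = "\<lambda>i. (-1) ^ (fst (monomial_index i) div 2) :: real"
  let ?M = "diag_op ?c"
  have l2: "?\<phi> x \<in> l2" if "x \<in> unit_ball d" for x
    using arcsin_coeff_nonneg summable_arcsin_coeff that by (rule feature_map_l2)
  have arcsin: "arcsin (dotp d x w) = l2_inner (?\<phi> x) (?\<phi> w)"
    if "x \<in> unit_ball d" "w \<in> unit_ball d" for x w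
    using l2_inner_feature_map[of arcsin_coeff "\<lambda>_. 1", OF arcsin_coeff_nonneg summable_arcsin_coeff _ that]
      arcsin_eq_arcsin_series[OF abs_dotp_le_1_if_unit_ball[OF that]]
    by (simp add: arcsin_series_def diag_op_def)
  have arsinh: "arsinh (dotp d w (Hmat x)) = l2_inner (?\<phi> w) (?M (?\<phi> (Hmat x)))"
    if "w \<in> unit_ball d" "x \<in> unit_ball d" for w x
    using l2_inner_feature_map[of arcsin_coeff "\<lambda>n. (-1) ^ (n div 2)",
        OF arcsin_coeff_nonneg summable_arcsin_coeff _ that(1) Hmat_unit_ball[OF that(2)]]
      arsinh_eq_arcsin_series[OF abs_dotp_le_1_if_unit_ball[OF that(1) Hmat_unit_ball[OF that(2)]]]
    by (simp add: arcsin_series_def)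
  have c: "\<bar>?c i\<bar> = 1" for i
    by simp
  obtain i j where "monomial_index i = (0, [])" "monomial_index j = (2, [])"
    using bij_monomial_index by (metis bij_pointE)
  then have "l2_indefinite ?M"
    by (intro l2_indefinite_diag_op[of ?c i j]) simp_all
  with l2 arcsin arsinh c show ?thesis
    by (intro conjI exI[of _ ?\<phi>] exI[of _ ?M])
      (auto intro: l2_linear_op_diag_op l2_adjoint_diag_op diag_op_involution)
qed

end
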